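(* Let $\Lambda,\Gamma$ be row-finite $k$-graphs and let $p:\Lambda\to\Gamma$ be a surjective $k$-graph morphism with $r$-path lifting. If $\Lambda$ is cofinal, then $\Gamma$ is cofinal.
   Context: A $k$-graph is a countable category $\Lambda$ with a functor $d:\Lambda\to\mathbb{N}^k$ with unique factorisation. $\Lambda^n=d^{-1}(n)$, $\Lambda^0$ = vertices, $uXv=\{\lambda\in X: r(\lambda)=u, s(\lambda)=v\}$; row-finite: $v\Lambda^n$ finite. A $k$-graph morphism is a degree-preserving functor. A surjective $k$-graph morphism $p:\Lambda\to\Gamma$ has $r$-path lifting if for all $v\in\Lambda^0$ and $\lambda\in p(v)\Gamma$ there is $\lambda'\in v\Lambda$ with $p(\lambda')=\lambda$. A $k$-graph $\Lambda$ is cofinal if for all $v,w\in\Lambda^0$ there is $N\in\mathbb{N}^k$ such that $v\Lambda s(\alpha)\neq\emptyset$ for every $\alpha\in w\Lambda^N$. *)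

theory Defs
  imports Main "HOL-Library.Countable_Set"
begin

text \<open>A k-graph is presented as a small category given by its set of morphisms
  Mor, range r, source s, composition comp (comp x y = x y, defined when s x = r y),
  and degree functor deg into N^k. Elements of N^k are represented as functions
  nat => nat vanishing at indices >= k. Objects are identified with identity
  morphisms (the vertices).\<close>

record 'a kgraph =
  Mor  :: "'a set"
  rng  :: "'a \<Rightarrow> 'a"
  src  :: "'a \<Rightarrow> 'a"
  comp :: "'a \<Rightarrow> 'a \<Rightarrow> 'a"
  deg  :: "'a \<Rightarrow> nat \<Rightarrow> nat"

definition NN :: "nat \<Rightarrow> (nat \<Rightarrow> nat) set" where
  "NN k = {n. \<forall>i\<ge>k. n i = 0}"

definition addv :: "(nat \<Rightarrow> nat) \<Rightarrow> (nat \<Rightarrow> nat) \<Rightarrow> nat \<Rightarrow> nat" where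
  "addv m n = (\<lambda>i. m i + n i)"

definition vertices :: "('a, 'b) kgraph_scheme \<Rightarrow> 'a set" where
  "vertices G = {v \<in> Mor G. rng G v = v}"

definition is_category :: "('a, 'b) kgraph_scheme \<Rightarrow> bool" where
  "is_category G \<longleftrightarrow>
     (\<forall>x\<in>Mor G. rng G x \<in> Mor G \<and> src G x \<in> Mor G
        \<and> rng G (rng G x) = rng G x \<and> src G (rng G x) = rng G x
        \<and> rng G (src G x) = src G x \<and> src G (src G x) = src G x
        \<and> comp G (rng G x) x = x \<and> comp G x (src G x) = x)
   \<and> (\<forall>x\<in>Mor G. \<forall>y\<in>Mor G. src G x = rng G y \<longrightarrow>
        comp G x y \<in> Mor G \<and> rng G (comp G x y) = rng G x \<and> src G (comp G x y) = src G y)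
   \<and> (\<forall>x\<in>Mor G. \<forall>y\<in>Mor G. \<forall>z\<in>Mor G. src G x = rng G y \<longrightarrow> src G y = rng G z \<longrightarrow>
        comp G (comp G x y) z = comp G x (comp G y z))"

definition is_kgraph :: "nat \<Rightarrow> ('a, 'b) kgraph_scheme \<Rightarrow> bool" where
  "is_kgraph k G \<longleftrightarrow>
     is_category G \<and> countable (Mor G)
   \<and> (\<forall>x\<in>Mor G. deg G x \<in> NN k)
   \<and> (\<forall>x\<in>Mor G. \<forall>y\<in>Mor G. src G x = rng G y \<longrightarrow>
        deg G (comp G x y) = addv (deg G x) (deg G y))
   \<and> (\<forall>x\<in>Mor G. \<forall>m\<in>NN k. \<forall>n\<in>NN k. deg G x = addv m n \<longrightarrow>
        (\<exists>!(y, z). y \<in> Mor G \<and> z \<in> Mor G \<and> src G y = rng G z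
              \<and> deg G y = m \<and> deg G z = n \<and> comp G y z = x))"

definition row_finite :: "('a, 'b) kgraph_scheme \<Rightarrow> bool" where
  "row_finite G \<longleftrightarrow>
     (\<forall>v\<in>vertices G. \<forall>n. finite {x \<in> Mor G. rng G x = v \<and> deg G x = n})"

definition is_kgraph_morphism ::
  "('a, 'c) kgraph_scheme \<Rightarrow> ('b, 'd) kgraph_scheme \<Rightarrow> ('a \<Rightarrow> 'b) \<Rightarrow> bool" where
  "is_kgraph_morphism L G p \<longleftrightarrow>
     (\<forall>x\<in>Mor L. p x \<in> Mor G \<and> deg G (p x) = deg L x
        \<and> rng G (p x) = p (rng L x) \<and> src G (p x) = p (src L x))
   \<and> (\<forall>v\<in>vertices L. p v \<in> vertices G)
   \<and> (\<forall>x\<in>Mor L. \<forall>y\<in>Mor L. src L x = rng L y \<longrightarrow> p (comp L x y) = comp G (p x) (p y))"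

definition r_path_lifting ::
  "('a, 'c) kgraph_scheme \<Rightarrow> ('b, 'd) kgraph_scheme \<Rightarrow> ('a \<Rightarrow> 'b) \<Rightarrow> bool" where
  "r_path_lifting L G p \<longleftrightarrow>
     (\<forall>v\<in>vertices L. \<forall>x\<in>Mor G. rng G x = p v \<longrightarrow>
        (\<exists>y\<in>Mor L. rng L y = v \<and> p y = x))"

definition cofinal :: "nat \<Rightarrow> ('a, 'b) kgraph_scheme \<Rightarrow> bool" where
  "cofinal k G \<longleftrightarrow>
     (\<forall>v\<in>vertices G. \<forall>w\<in>vertices G. \<exists>N\<in>NN k.
        \<forall>\<alpha>\<in>Mor G. rng G \<alpha> = w \<and> deg G \<alpha> = N \<longrightarrow>
          (\<exists>\<mu>\<in>Mor G. rng G \<mu> = v \<and> src G \<mu> = src G \<alpha>))"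

end

theory Submission
  imports Defs
begin

text \<open>Lift the vertices v, w of \<Gamma> to vertices v', w' of \<Lambda> and take the N that
  cofinality of \<Lambda> provides for v', w'. A path \<alpha> \<in> w\<Gamma>^N lifts to a path of the same
  degree starting at w', so some \<mu> \<in> v'\<Lambda> ends where the lift ends; its image lies in
  v\<Gamma>s(\<alpha>).\<close>

lemma surj_kgraph_morphism_vertex_preimage:
  assumes "is_category L" and "is_kgraph_morphism L G p"
    and "p ` Mor L = Mor G" and "w \<in> vertices G"
  obtains w' where "w' \<in> vertices L" and "p w' = w"
proof -
  from \<open>w \<in> vertices G\<close> have "w \<in> p ` Mor L" and w_rng: "rng G w = w"
    using assms(3) by (auto simp: vertices_def)
  then obtain x where x: "x \<in> Mor L" "p x = w" by blast
  have "rng L x \<in> vertices L"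
    using assms(1) x by (auto simp: is_category_def vertices_def)
  moreover have "p (rng L x) = w"
    using assms(2) x w_rng by (auto simp: is_kgraph_morphism_def)
  ultimately show thesis by (rule that)
qed

lemma r_path_lifting_obtain_lift:
  assumes "r_path_lifting L G p" and "is_kgraph_morphism L G p"
    and "v \<in> vertices L" and "\<alpha> \<in> Mor G" and "rng G \<alpha> = p v"
  obtains \<alpha>' where "\<alpha>' \<in> Mor L" and "rng L \<alpha>' = v"
    and "deg L \<alpha>' = deg G \<alpha>" and "p (src L \<alpha>') = src G \<alpha>"
proof -
  obtain \<alpha>' where "\<alpha>' \<in> Mor L" "rng L \<alpha>' = v" "p \<alpha>' = \<alpha>"
    using assms(1,3-5) unfolding r_path_lifting_def by blast
  with assms(2) show thesis
    by (intro that) (auto simp: is_kgraph_morphism_def)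
qed

theorem theorem4p7:
  fixes k :: nat and L :: "'a kgraph" and G :: "'b kgraph" and p :: "'a \<Rightarrow> 'b"
  assumes "is_kgraph k L" and "is_kgraph k G"
    and "row_finite L" and "row_finite G"
    and "is_kgraph_morphism L G p"
    and "p ` Mor L = Mor G"
    and "r_path_lifting L G p"
    and "cofinal k L"
  shows "cofinal k G"
  unfolding cofinal_def
proof (intro ballI)
  fix v w assume "v \<in> vertices G" and "w \<in> vertices G"
  have cat: "is_category L" using assms(1) by (simp add: is_kgraph_def)
  obtain v' where v': "v' \<in> vertices L" "p v' = v"
    using surj_kgraph_morphism_vertex_preimage[OF cat assms(5,6) \<open>v \<in> vertices G\<close>] .
  obtain w' where w': "w' \<in> vertices L" "p w' = w"
    using surj_kgraph_morphism_vertex_preimage[OF cat assms(5,6) \<open>w \<in> vertices G\<close>] .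
  obtain N where "N \<in> NN k" and N: "\<forall>\<alpha>\<in>Mor L. rng L \<alpha> = w' \<and> deg L \<alpha> = N \<longrightarrow>
      (\<exists>\<mu>\<in>Mor L. rng L \<mu> = v' \<and> src L \<mu> = src L \<alpha>)"
    using assms(8) v'(1) w'(1) unfolding cofinal_def by blast
  have "\<exists>\<mu>\<in>Mor G. rng G \<mu> = v \<and> src G \<mu> = src G \<alpha>"
    if \<alpha>: "\<alpha> \<in> Mor G" "rng G \<alpha> = w" "deg G \<alpha> = N" for \<alpha>
  proof -
    obtain \<alpha>' where \<alpha>': "\<alpha>' \<in> Mor L" "rng L \<alpha>' = w'" "deg L \<alpha>' = N" "p (src L \<alpha>') = src G \<alpha>"
      using r_path_lifting_obtain_lift[OF assms(7,5) w'(1) \<alpha>(1)] \<alpha>(2,3) w'(2) by metis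
    then obtain \<mu> where "\<mu> \<in> Mor L" "rng L \<mu> = v'" "src L \<mu> = src L \<alpha>'"
      using N by blast
    then show ?thesis
      using assms(5) v'(2) \<alpha>'(4) by (intro bexI[of _ "p \<mu>"]) (auto simp: is_kgraph_morphism_def)
  qed
  then show "\<exists>N\<in>NN k. \<forall>\<alpha>\<in>Mor G. rng G \<alpha> = w \<and> deg G \<alpha> = N \<longrightarrow>
      (\<exists>\<mu>\<in>Mor G. rng G \<mu> = v \<and> src G \<mu> = src G \<alpha>)"
    using \<open>N \<in> NN k\<close> by blast
qed

end
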